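(* Let $n \ge q \ge 1$ be integers and let $r = \lceil n/q \rceil$. Then the optimal competitive ratio of the parallelized greedy algorithm with $n$ agents and at most $q$ iterations is \[ \rho(n,q) = \begin{cases} \frac{1}{r} & \text{if } n \equiv 1 \pmod q,\\ \frac{1}{r+1} & \text{otherwise.}\end{cases} \] Moreover, this value is attained by the following iteration assignment $P^*_{n,q}$: if $n \equiv 1 \pmod q$, then $P^*_{n,q}(i) = \lceil i/(r-1) \rceil$ for $i<n$ and $P^*_{n,q}(n) = q$; otherwise, $P^*_{n,q}(i) = \lceil i/r \rceil$ for all $i \in [n]$.
   Context: A set function $f: 2^S \to \mathbb{R}_{\ge 0}$ on a finite base set $S$ is normalized if $f(\emptyset)=0$, monotone if $f(\{e\}\mid A)\ge 0$ for all $e\in S$, $A\subseteq S$, and submodular if $f(\{e\}\mid A) \ge f(\{e\}\mid B)$ for all $A\subseteq B\subseteq S$ and $e\in S\setminus B$, where $f(A\mid B) = f(A\cup B)-f(B)$. Let $\mathcal{F}$ be the set of normalized, monotone, submodular functions. There are $n$ agents $N=[n]=\{1,\dots,n\}$; agent $i$ has a decision set $X_i\subseteq S$, with $X_1,\dots,X_n$ a partition of $S$. An action profile is $x=(x_1,\dots,x_n)\in X = X_1\times\cdots\times X_n$, valued as $f(x) = f(\{x_1,\dots,x_n\})$; for $M\subseteq N$, $x_M$ denotes $\{x_i : i\in M\}$. Let $x^{\mathrm{opt}}\in\arg\max_{x\in X} f(x)$. An iteration assignment is a function $P:[n]\to[q]$ with $P(i)\le P(j)$ whenever $i<j$; $\mathcal{P}_{n,q}$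 denotes the set of such assignments. The parallelized greedy algorithm with assignment $P$ produces $x^{\mathrm{sol}}$ with $x^{\mathrm{sol}}_i \in \arg\max_{x_i\in X_i} f(x_i \mid x^{\mathrm{sol}}_{\mathcal{N}_i})$, where $\mathcal{N}_i = \{j : P(j) < P(i)\}$; when several greedy outcomes are possible, $x^{\mathrm{sol}}$ is taken to be the worst one (smallest $f$-value). Define $\gamma(f,X,P) = f(x^{\mathrm{sol}})/f(x^{\mathrm{opt}})$, $\gamma(P) = \inf_{f\in\mathcal{F},X}\gamma(f,X,P)$ (infimum over all finite $S$, all such $f$ and all decision sets), and $\rho(n,q) = \sup_{P\in\mathcal{P}_{n,q}}\gamma(P)$. *)

theory Defs
  imports "HOL-Library.FuncSet" Complex_Main
begin

text \<open>Base sets S are finite subsets of nat (every finite base set is isomorphic to one).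
Agents are 1..n; an action profile is an extensional function on {1..n}.\<close>

definition marg :: "(nat set \<Rightarrow> real) \<Rightarrow> nat set \<Rightarrow> nat set \<Rightarrow> real" where
  "marg f A B = f (A \<union> B) - f B"

definition normalized :: "(nat set \<Rightarrow> real) \<Rightarrow> bool" where
  "normalized f \<longleftrightarrow> f {} = 0"

definition monotone_sf :: "nat set \<Rightarrow> (nat set \<Rightarrow> real) \<Rightarrow> bool" where
  "monotone_sf S f \<longleftrightarrow> (\<forall>e\<in>S. \<forall>A. A \<subseteq> S \<longrightarrow> marg f {e} A \<ge> 0)"

definition submodular_sf :: "nat set \<Rightarrow> (nat set \<Rightarrow> real) \<Rightarrow> bool" where
  "submodular_sf S f \<longleftrightarrow>
     (\<forall>A B e. A \<subseteq> B \<and> B \<subseteq> S \<and> e \<in> S - B \<longrightarrow> marg f {e} A \<ge> marg f {e} B)"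

definition in_F :: "nat set \<Rightarrow> (nat set \<Rightarrow> real) \<Rightarrow> bool" where
  "in_F S f \<longleftrightarrow> (\<forall>A. A \<subseteq> S \<longrightarrow> f A \<ge> 0) \<and> normalized f \<and> monotone_sf S f \<and> submodular_sf S f"

definition decision_sets :: "nat \<Rightarrow> nat set \<Rightarrow> (nat \<Rightarrow> nat set) \<Rightarrow> bool" where
  "decision_sets n S X \<longleftrightarrow>
     (\<forall>i\<in>{1..n}. X i \<noteq> {}) \<and>
     (\<forall>i\<in>{1..n}. \<forall>j\<in>{1..n}. i \<noteq> j \<longrightarrow> X i \<inter> X j = {}) \<and>
     (\<Union>i\<in>{1..n}. X i) = S"

definition profiles :: "nat \<Rightarrow> (nat \<Rightarrow> nat set) \<Rightarrow> (nat \<Rightarrow> nat) set" where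
  "profiles n X = Pi\<^sub>E {1..n} X"

definition val :: "(nat set \<Rightarrow> real) \<Rightarrow> nat \<Rightarrow> (nat \<Rightarrow> nat) \<Rightarrow> real" where
  "val f n x = f (x ` {1..n})"

definition opt_val :: "(nat set \<Rightarrow> real) \<Rightarrow> nat \<Rightarrow> (nat \<Rightarrow> nat set) \<Rightarrow> real" where
  "opt_val f n X = Max (val f n ` profiles n X)"

definition assignments :: "nat \<Rightarrow> nat \<Rightarrow> (nat \<Rightarrow> nat) set" where
  "assignments n q = {P. (\<forall>i\<in>{1..n}. P i \<in> {1..q}) \<and>
                         (\<forall>i\<in>{1..n}. \<forall>j\<in>{1..n}. i < j \<longrightarrow> P i \<le> P j)}"

definition pred_agents :: "nat \<Rightarrow> (nat \<Rightarrow> nat) \<Rightarrow> nat \<Rightarrow> nat set" where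
  "pred_agents n P i = {j\<in>{1..n}. P j < P i}"

definition greedy_outcome :: "(nat set \<Rightarrow> real) \<Rightarrow> nat \<Rightarrow> (nat \<Rightarrow> nat set) \<Rightarrow> (nat \<Rightarrow> nat) \<Rightarrow> (nat \<Rightarrow> nat) \<Rightarrow> bool" where
  "greedy_outcome f n X P x \<longleftrightarrow> x \<in> profiles n X \<and>
     (\<forall>i\<in>{1..n}. \<forall>y\<in>X i.
        marg f {y} (x ` pred_agents n P i) \<le> marg f {x i} (x ` pred_agents n P i))"

definition gamma_inst :: "(nat set \<Rightarrow> real) \<Rightarrow> nat \<Rightarrow> (nat \<Rightarrow> nat set) \<Rightarrow> (nat \<Rightarrow> nat) \<Rightarrow> real" where
  "gamma_inst f n X P = Inf {val f n x / opt_val f n X | x. greedy_outcome f n X P x}"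

definition gamma :: "nat \<Rightarrow> (nat \<Rightarrow> nat) \<Rightarrow> real" where
  "gamma n P = Inf {gamma_inst f n X P | S f X.
       finite S \<and> in_F S f \<and> decision_sets n S X \<and> opt_val f n X > 0}"

definition rho :: "nat \<Rightarrow> nat \<Rightarrow> real" where
  "rho n q = Sup (gamma n ` assignments n q)"

definition Pstar :: "nat \<Rightarrow> nat \<Rightarrow> nat \<Rightarrow> nat" where
  "Pstar n q i = (let r = nat \<lceil>real n / real q\<rceil> in
      if n mod q = 1 mod q then (if i < n then nat \<lceil>real i / real (r - 1)\<rceil> else q)
      else nat \<lceil>real i / real r\<rceil>)"

end

theory Submission
  imports Defs
begin

text \<open>
  Call the load of an iteration of a nondecreasing assignment \<open>P\<close> the number of its agents,
  plus one unless it is the last iteration \<open>L\<close>. The ratio of \<open>P\<close> is exactly one over its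
  maximal load \<open>D\<close>.

  Greedy is never worse: with \<open>G k\<close> the value of the greedy choices of iterations \<open>1..k\<close>,
  submodularity bounds the optimum by \<open>G (L - 1)\<close> plus, for every agent, the greedy gain
  \<open>G k - G (k - 1)\<close> of its own iteration \<open>k\<close>. Iterations \<open>k < L\<close> have at most \<open>D - 1\<close>
  agents and \<open>L\<close> at most \<open>D\<close>, so the sum telescopes to at most \<open>D * G L\<close>.
  It can be that bad: agents can be lured onto interchangeable decoys (see \<open>trap_fun\<close>).

  Finally, \<open>n\<close> agents in \<open>q\<close> iterations force \<open>n + q \<le> q * D + 1\<close> by pigeonhole; the
  least such \<open>D\<close> is the stated denominator, and \<open>P*\<close> attains it.
\<close>

section \<open>Monotone submodular functions\<close>

lemma in_F_marg_nonneg: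
  assumes "in_F S f" and "e \<in> S" and "A \<subseteq> S"
  shows "0 \<le> marg f {e} A"
  using assms unfolding in_F_def monotone_sf_def by auto

lemma in_F_mono:
  assumes F: "in_F S f" and fin: "finite S" and AB: "A \<subseteq> B" and BS: "B \<subseteq> S"
  shows "f A \<le> f B"
proof -
  have "f A \<le> f (A \<union> D)" if "finite D" and "D \<subseteq> S" for D
    using that
  proof (induction D rule: finite_induct)
    case (insert d D)
    have "0 \<le> marg f {d} (A \<union> D)"
      using in_F_marg_nonneg[OF F] insert.prems AB BS by auto
    then show ?case
      using insert by (simp add: marg_def)
  qed simp
  from this[of "B - A"] show ?thesis
    using AB BS fin by (metis Diff_subset Un_Diff_cancel Un_absorb1 finite_subset subset_trans)
qed

lemma in_F_marg_antimono:
  assumes F: "in_F S f" and "A \<subseteq> B" and "B \<subseteq> S" and "e \<in> S"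
  shows "marg f {e} B \<le> marg f {e} A"
proof (cases "e \<in> B")
  case True
  then have "marg f {e} B = 0"
    by (simp add: marg_def insert_absorb)
  then show ?thesis
    using in_F_marg_nonneg[OF F, of e A] assms by auto
next
  case False
  then show ?thesis
    using assms unfolding in_F_def submodular_sf_def by blast
qed

lemma in_F_le_sum_marg:
  assumes F: "in_F S f" and fin: "finite S" and AS: "A \<subseteq> S" and ES: "E \<subseteq> S"
  shows "f (A \<union> E) \<le> f A + (\<Sum>e\<in>E. marg f {e} A)"
proof -
  have "finite E"
    using fin ES finite_subset by blast
  then show ?thesis
    using ES
  proof (induction E rule: finite_induct)
    case (insert e E)
    have "marg f {e} (A \<union> E) \<le> marg f {e} A"
      using in_F_marg_antimono[OF F, of A "A \<union> E" e] AS insert.prems by auto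
    moreover have "f (A \<union> insert e E) = f (A \<union> E) + marg f {e} (A \<union> E)"
      by (simp add: marg_def)
    ultimately show ?case
      using insert by simp
  qed simp
qed

section \<open>Greedy outcomes and the ratio \<open>gamma\<close>\<close>

lemma decision_sets_subset:
  "decision_sets n S X \<Longrightarrow> i \<in> {1..n} \<Longrightarrow> X i \<subseteq> S"
  unfolding decision_sets_def by auto

lemma profile_image_subset:
  "decision_sets n S X \<Longrightarrow> x \<in> profiles n X \<Longrightarrow> A \<subseteq> {1..n} \<Longrightarrow> x ` A \<subseteq> S"
  unfolding decision_sets_def profiles_def by (auto simp: PiE_iff)

lemma profiles_nonempty:
  "decision_sets n S X \<Longrightarrow> profiles n X \<noteq> {}"
  unfolding decision_sets_def profiles_def by (simp add: PiE_eq_empty_iff)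

lemma finite_profiles:
  "finite S \<Longrightarrow> decision_sets n S X \<Longrightarrow> finite (profiles n X)"
  unfolding profiles_def
  by (intro finite_PiE) (auto intro: finite_subset[OF decision_sets_subset])

lemma val_le_opt_val:
  "finite S \<Longrightarrow> decision_sets n S X \<Longrightarrow> x \<in> profiles n X \<Longrightarrow> val f n x \<le> opt_val f n X"
  unfolding opt_val_def by (simp add: finite_profiles)

lemma opt_val_attained:
  assumes "finite S" and "decision_sets n S X"
  obtains w where "w \<in> profiles n X" and "opt_val f n X = val f n w"
proof -
  have "opt_val f n X \<in> val f n ` profiles n X"
    unfolding opt_val_def using finite_profiles[OF assms] profiles_nonempty[OF assms(2)] by simp
  then show ?thesis
    using that by (metis imageE)
qed

lemma val_le_sum_marg:
  assumes F: "in_F S f" and fin: "finite S" and dec: "decision_sets n S X"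
    and w: "w \<in> profiles n X" and TS: "T \<subseteq> S"
  shows "val f n w \<le> f T + (\<Sum>i\<in>{1..n}. marg f {w i} T)"
proof -
  have wS: "w ` {1..n} \<subseteq> S"
    by (intro profile_image_subset[OF dec w]) auto
  have "val f n w \<le> f (T \<union> w ` {1..n})"
    unfolding val_def using TS wS by (intro in_F_mono[OF F fin]) auto
  also have "\<dots> \<le> f T + (\<Sum>e\<in>w ` {1..n}. marg f {e} T)"
    by (rule in_F_le_sum_marg[OF F fin TS wS])
  also have "\<dots> \<le> f T + (\<Sum>i\<in>{1..n}. marg f {w i} T)"
    using sum_image_le[of "{1..n}" "\<lambda>e. marg f {e} T" w] in_F_marg_nonneg[OF F _ TS] wS
    by (simp add: image_subset_iff)
  finally show ?thesis .
qed

lemma pred_agents_less: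
  assumes "mono_on {1..n} P" and "i \<in> {1..n}" and "j \<in> pred_agents n P i"
  shows "j < i"
proof -
  have "j \<in> {1..n}" and "P j < P i"
    using assms(3) unfolding pred_agents_def by auto
  then show ?thesis
    using mono_onD[OF assms(1,2) \<open>j \<in> {1..n}\<close>] by (cases "i \<le> j") auto
qed

lemma best_response_exists:
  assumes "finite S" and "decision_sets n S X" and "i \<in> {1..n}"
  obtains z where "z \<in> X i" and "\<forall>y\<in>X i. marg f {y} A \<le> marg f {z} A"
proof -
  define g where "g y = marg f {y} A" for y
  have "finite (X i)"
    using finite_subset[OF decision_sets_subset[OF assms(2,3)] assms(1)] .
  moreover have "X i \<noteq> {}"
    using conjunct1[OF assms(2)[unfolded decision_sets_def]] assms(3) by blast
  ultimately have "Max (g ` X i) \<in> g ` X i" and "\<forall>y\<in>X i. g y \<le> Max (g ` X i)"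
    by simp_all
  then show ?thesis
    using that unfolding g_def by auto
qed

lemma greedy_outcome_exists:
  assumes mono: "mono_on {1..n} P"
    and fin: "finite S" and dec: "decision_sets n S X"
  obtains x where "greedy_outcome f n X P x"
proof -
  let ?greedy_upto = "\<lambda>k x. \<forall>i\<in>{1..k}. \<forall>y\<in>X i.
        marg f {y} (x ` pred_agents n P i) \<le> marg f {x i} (x ` pred_agents n P i)"
  have "\<exists>x\<in>profiles n X. ?greedy_upto k x" if "k \<le> n" for k
    using that
  proof (induction k)
    case 0
    then show ?case
      using profiles_nonempty[OF dec] by auto
  next
    case (Suc k)
    then obtain x where x: "x \<in> profiles n X" "?greedy_upto k x"
      by auto
    have k: "Suc k \<in> {1..n}"
      using Suc.prems by simp
    obtain z where z: "z \<in> X (Suc k)"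
      and best: "\<forall>y\<in>X (Suc k). marg f {y} (x ` pred_agents n P (Suc k))
                  \<le> marg f {z} (x ` pred_agents n P (Suc k))"
      using best_response_exists[OF fin dec k] .
    define x' where "x' = x(Suc k := z)"
    have same_preds: "x' ` pred_agents n P i = x ` pred_agents n P i" if "i \<in> {1..Suc k}" for i
    proof -
      have "Suc k \<notin> pred_agents n P i"
        using pred_agents_less[OF mono, of i "Suc k"] that k by auto
      then show ?thesis
        unfolding x'_def by (intro image_cong) auto
    qed
    have "?greedy_upto (Suc k) x'"
    proof (intro ballI)
      fix i y
      assume i: "i \<in> {1..Suc k}" and y: "y \<in> X i"
      show "marg f {y} (x' ` pred_agents n P i) \<le> marg f {x' i} (x' ` pred_agents n P i)"
      proof (cases "i = Suc k")
        case True
        then show ?thesis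
          using same_preds[OF i] best y unfolding x'_def by simp
      next
        case False
        then show ?thesis
          using same_preds[OF i] x(2) i y unfolding x'_def by simp
      qed
    qed
    moreover have "x' \<in> profiles n X"
      using x(1) z k unfolding profiles_def x'_def by (auto simp: PiE_iff extensional_def)
    ultimately show ?case
      by blast
  qed
  from this[of n] show ?thesis
    using that unfolding greedy_outcome_def by auto
qed

lemma greedy_ratio_nonneg:
  assumes F: "in_F S f" and dec: "decision_sets n S X" and opt: "0 < opt_val f n X"
    and greedy: "greedy_outcome f n X P x"
  shows "0 \<le> val f n x / opt_val f n X"
proof -
  have "x ` {1..n} \<subseteq> S"
    using greedy profile_image_subset[OF dec] unfolding greedy_outcome_def by blast
  then show ?thesis
    using F opt unfolding in_F_def val_def by simp
qed

lemma gamma_inst_nonneg: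
  assumes mono: "mono_on {1..n} P"
    and fin: "finite S" and F: "in_F S f" and dec: "decision_sets n S X" and opt: "0 < opt_val f n X"
  shows "0 \<le> gamma_inst f n X P"
proof -
  obtain x where "greedy_outcome f n X P x"
    using greedy_outcome_exists[OF mono fin dec] .
  then show ?thesis
    unfolding gamma_inst_def using greedy_ratio_nonneg[OF F dec opt] by (intro cInf_greatest) auto
qed

lemma gamma_le_greedy_ratio:
  assumes mono: "mono_on {1..n} P"
    and fin: "finite S" and F: "in_F S f" and dec: "decision_sets n S X" and opt: "0 < opt_val f n X"
    and greedy: "greedy_outcome f n X P x"
  shows "gamma n P \<le> val f n x / opt_val f n X"
proof -
  have "gamma n P \<le> gamma_inst f n X P"
    unfolding gamma_def using fin F dec opt gamma_inst_nonneg[OF mono]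
    by (intro cInf_lower) (blast, fast)
  also have "\<dots> \<le> val f n x / opt_val f n X"
    unfolding gamma_inst_def using greedy greedy_ratio_nonneg[OF F dec opt]
    by (intro cInf_lower) (blast, fast)
  finally show ?thesis .
qed

lemma gamma_ge_inverse:
  assumes mono: "mono_on {1..n} P"
    and inst: "finite S\<^sub>0" "in_F S\<^sub>0 f\<^sub>0" "decision_sets n S\<^sub>0 X\<^sub>0" "0 < opt_val f\<^sub>0 n X\<^sub>0"
    and D: "0 < D"
    and bound: "\<And>S f X x. finite S \<Longrightarrow> in_F S f \<Longrightarrow> decision_sets n S X \<Longrightarrow>
      greedy_outcome f n X P x \<Longrightarrow> opt_val f n X \<le> D * val f n x"
  shows "1 / D \<le> gamma n P"
  unfolding gamma_def
proof (rule cInf_greatest)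
  fix g
  assume "g \<in> {gamma_inst f n X P |S f X. finite S \<and> in_F S f \<and> decision_sets n S X \<and> 0 < opt_val f n X}"
  then obtain S f X where g: "g = gamma_inst f n X P"
    and fin: "finite S" and F: "in_F S f" and dec: "decision_sets n S X" and opt: "0 < opt_val f n X"
    by blast
  obtain x where "greedy_outcome f n X P x"
    using greedy_outcome_exists[OF mono fin dec] .
  moreover have "1 / D \<le> val f n x / opt_val f n X" if "greedy_outcome f n X P x" for x
    using bound[OF fin F dec that] opt D by (simp add: field_simps)
  ultimately show "1 / D \<le> g"
    unfolding g gamma_inst_def by (intro cInf_greatest) auto
qed (use inst in blast)

section \<open>Iteration loads\<close>

text \<open>\<open>P n\<close> is the last iteration only for nondecreasing \<open>P\<close>, which is assumed wherever
  loads are used.\<close>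

definition iteration_load :: "nat \<Rightarrow> (nat \<Rightarrow> nat) \<Rightarrow> nat \<Rightarrow> nat" where
  "iteration_load n P k = card {i\<in>{1..n}. P i = k} + (if k < P n then 1 else 0)"

definition max_load :: "nat \<Rightarrow> (nat \<Rightarrow> nat) \<Rightarrow> nat" where
  "max_load n P = Max (iteration_load n P ` {1..P n})"

lemma iteration_load_le_max_load:
  "k \<in> {1..P n} \<Longrightarrow> iteration_load n P k \<le> max_load n P"
  unfolding max_load_def by simp

lemma max_load_attained:
  assumes "1 \<le> P n"
  obtains k where "k \<in> {1..P n}" and "iteration_load n P k = max_load n P"
proof -
  have "max_load n P \<in> iteration_load n P ` {1..P n}"
    unfolding max_load_def using assms by (intro Max_in) auto
  then show ?thesis
    using that by (metis imageE)
qed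

lemma max_load_le:
  "1 \<le> P n \<Longrightarrow> \<forall>k\<in>{1..P n}. iteration_load n P k \<le> B \<Longrightarrow> max_load n P \<le> B"
  unfolding max_load_def by simp

lemma iteration_load_pos:
  assumes "1 \<le> n" and "p \<le> P n"
  shows "1 \<le> iteration_load n P p"
proof (cases "p < P n")
  case False
  then have "n \<in> {i\<in>{1..n}. P i = p}"
    using assms by simp
  then have "0 < card {i\<in>{1..n}. P i = p}"
    by (intro card_gt_0_iff[THEN iffD2]) auto
  then show ?thesis
    unfolding iteration_load_def by simp
qed (simp add: iteration_load_def)

lemma greedy_marg_le_increment:
  assumes F: "in_F S f" and fin: "finite S" and dec: "decision_sets n S X"
    and greedy: "greedy_outcome f n X P x"
    and i: "i \<in> {1..n}" and Pi: "1 \<le> P i" and e: "e \<in> X i" and k: "P i - 1 \<le> k"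
  shows "marg f {e} (x ` {j\<in>{1..n}. P j \<le> k})
    \<le> f (x ` {j\<in>{1..n}. P j \<le> P i}) - f (x ` {j\<in>{1..n}. P j \<le> P i - 1})"
proof -
  have x: "x \<in> profiles n X"
    using greedy unfolding greedy_outcome_def by simp
  have preds: "pred_agents n P i = {j\<in>{1..n}. P j \<le> P i - 1}"
    using Pi unfolding pred_agents_def by auto
  have "x ` pred_agents n P i \<subseteq> x ` {j\<in>{1..n}. P j \<le> k}"
    using k by (auto simp: preds)
  moreover have "e \<in> S"
    using decision_sets_subset[OF dec i] e by blast
  ultimately have "marg f {e} (x ` {j\<in>{1..n}. P j \<le> k}) \<le> marg f {e} (x ` pred_agents n P i)"
    by (intro in_F_marg_antimono[OF F] profile_image_subset[OF dec x]) auto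
  also have "\<dots> \<le> marg f {x i} (x ` pred_agents n P i)"
    using greedy i e unfolding greedy_outcome_def by blast
  also have "\<dots> \<le> f (x ` {j\<in>{1..n}. P j \<le> P i}) - f (x ` pred_agents n P i)"
    unfolding marg_def using i
    by (intro diff_right_mono in_F_mono[OF F fin] profile_image_subset[OF dec x]) (auto simp: preds)
  finally show ?thesis
    by (simp add: preds)
qed

lemma sum_increments_le:
  fixes F :: "nat \<Rightarrow> real" and P :: "nat \<Rightarrow> nat"
  assumes F: "mono F" and I: "finite I" and range: "\<forall>i\<in>I. P i \<in> {1..L}"
    and card: "\<forall>k\<in>{1..L}. card {i\<in>I. P i = k} + (if k < L then 1 else 0) \<le> D"
  shows "(\<Sum>i\<in>I. F (P i) - F (P i - 1)) \<le> (real D - 1) * (F L - F 0) + (F L - F (L - 1))"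
proof -
  have "(\<Sum>i\<in>I. F (P i) - F (P i - 1))
      = (\<Sum>k\<in>{1..L}. \<Sum>i\<in>{i\<in>I. P i = k}. F (P i) - F (P i - 1))"
    using range I by (intro sum.group[symmetric]) auto
  also have "\<dots> = (\<Sum>k\<in>{1..L}. real (card {i\<in>I. P i = k}) * (F k - F (k - 1)))"
    by simp
  also have "\<dots> \<le> (\<Sum>k\<in>{1..L}. (real D - 1 + (if k = L then 1 else 0)) * (F k - F (k - 1)))"
  proof (intro sum_mono mult_right_mono)
    fix k
    assume "k \<in> {1..L}"
    then show "real (card {i\<in>I. P i = k}) \<le> real D - 1 + (if k = L then 1 else 0)"
      using card by (cases "k = L") force+
    show "0 \<le> F k - F (k - 1)"
      using F by (simp add: monoD)
  qed
  also have "\<dots> = (\<Sum>k\<in>{1..L}. (real D - 1) * (F k - F (k - 1))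
      + (if k = L then F k - F (k - 1) else 0))"
    by (intro sum.cong) (simp_all add: algebra_simps)
  also have "\<dots> = (real D - 1) * (\<Sum>k\<in>{1..L}. F k - F (k - 1))
      + (\<Sum>k\<in>{1..L}. if k = L then F k - F (k - 1) else 0)"
    by (simp only: sum.distrib sum_distrib_left)
  also have "(\<Sum>k\<in>{1..L}. F k - F (k - 1)) = F L - F 0"
    by (induction L) (simp_all add: sum.cl_ivl_Suc)
  also have "(\<Sum>k\<in>{1..L}. if k = L then F k - F (k - 1) else 0) = F L - F (L - 1)"
    by (cases L) simp_all
  finally show ?thesis .
qed

lemma opt_val_le_times_greedy_val:
  assumes mono: "mono_on {1..n} P"
    and pos: "\<forall>i\<in>{1..n}. 1 \<le> P i" and n: "1 \<le> n"
    and loads: "\<forall>k\<in>{1..P n}. iteration_load n P k \<le> D"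
    and F: "in_F S f" and fin: "finite S" and dec: "decision_sets n S X"
    and greedy: "greedy_outcome f n X P x"
  shows "opt_val f n X \<le> real D * val f n x"
proof -
  define L where "L = P n"
  define G where "G k = f (x ` {i\<in>{1..n}. P i \<le> k})" for k
  define T where "T = x ` {i\<in>{1..n}. P i \<le> L - 1}"
  have x: "x \<in> profiles n X"
    using greedy unfolding greedy_outcome_def by simp
  have range: "\<forall>i\<in>{1..n}. P i \<in> {1..L}"
    using mono_onD[OF mono] pos n unfolding L_def by auto
  have "mono G"
    unfolding G_def
    by (intro monoI in_F_mono[OF F fin] image_mono profile_image_subset[OF dec x]) auto
  have "{i\<in>{1..n}. P i \<le> 0} = {}"
    using pos by force
  then have "G 0 = 0"
    using F unfolding G_def in_F_def normalized_def by (metis image_empty)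
  have "{i\<in>{1..n}. P i \<le> L} = {1..n}"
    using range by auto
  then have "G L = val f n x"
    unfolding G_def val_def by simp
  obtain w where w: "w \<in> profiles n X" and opt: "opt_val f n X = val f n w"
    using opt_val_attained[OF fin dec] .
  have "T \<subseteq> S"
    unfolding T_def by (intro profile_image_subset[OF dec x]) auto
  then have "val f n w \<le> f T + (\<Sum>i\<in>{1..n}. marg f {w i} T)"
    by (rule val_le_sum_marg[OF F fin dec w])
  also have "(\<Sum>i\<in>{1..n}. marg f {w i} T) \<le> (\<Sum>i\<in>{1..n}. G (P i) - G (P i - 1))"
    using w range unfolding T_def G_def profiles_def
    by (intro sum_mono greedy_marg_le_increment[OF F fin dec greedy]) (auto simp: diff_le_mono)
  also have "\<dots> \<le> (real D - 1) * (G L - G 0) + (G L - G (L - 1))"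
    using loads range unfolding iteration_load_def L_def
    by (intro sum_increments_le[OF \<open>mono G\<close>]) auto
  finally show ?thesis
    unfolding opt \<open>G 0 = 0\<close> \<open>G L = val f n x\<close> unfolding G_def T_def by (simp add: algebra_simps)
qed

section \<open>An instance on which greedy attains the bound\<close>

definition hit_plus_card :: "nat set \<Rightarrow> nat set \<Rightarrow> nat set \<Rightarrow> real" where
  "hit_plus_card U B A = (if A \<inter> U = {} then 0 else 1) + real (card (A \<inter> B))"

lemma marg_hit_plus_card:
  assumes "finite B"
  shows "marg (hit_plus_card U B) {e} A =
    (if e \<in> A then 0 else (if e \<in> U \<and> A \<inter> U = {} then 1 else 0) + (if e \<in> B then 1 else 0))"
proof (cases "e \<in> A")
  case True
  then show ?thesis
    by (simp add: marg_def insert_absorb)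
next
  case False
  have "card (insert e A \<inter> B) = card (A \<inter> B) + (if e \<in> B then 1 else 0)"
    using False assms by (simp add: Int_insert_left)
  then show ?thesis
    using False unfolding marg_def hit_plus_card_def by auto
qed

lemma in_F_hit_plus_card:
  assumes "finite B"
  shows "in_F S (hit_plus_card U B)"
  unfolding in_F_def normalized_def monotone_sf_def submodular_sf_def
proof (intro conjI allI impI ballI)
  fix A C e
  assume "A \<subseteq> C \<and> C \<subseteq> S \<and> e \<in> S - C"
  then show "marg (hit_plus_card U B) {e} C \<le> marg (hit_plus_card U B) {e} A"
    unfolding marg_hit_plus_card[OF assms] by auto
qed (auto simp: hit_plus_card_def marg_hit_plus_card[OF assms])

text \<open>Agent \<open>i\<close> may take the decoy \<open>i\<close> and, from
  iteration \<open>p\<close> on, also its own element \<open>n + i\<close>. The decoys of agents in iterations \<open>\<ge> p\<close>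
  are worth 1 together, each own element of an agent in iteration \<open>p\<close> is worth 1. Agents in
  iteration \<open>p\<close> see no such decoy yet and own elements of later agents are worthless, so taking
  decoys throughout is a greedy outcome (by ties) worth 1, while the optimum collects the load
  of \<open>p\<close>.\<close>

definition trap_choices :: "nat \<Rightarrow> (nat \<Rightarrow> nat) \<Rightarrow> nat \<Rightarrow> nat \<Rightarrow> nat set" where
  "trap_choices n P p i = (if P i < p then {i} else {i, n + i})"

definition trap_fun :: "nat \<Rightarrow> (nat \<Rightarrow> nat) \<Rightarrow> nat \<Rightarrow> nat set \<Rightarrow> real" where
  "trap_fun n P p = hit_plus_card {i\<in>{1..n}. p \<le> P i} ((+) n ` {i\<in>{1..n}. P i = p})"

lemma marg_trap_fun:
  "marg (trap_fun n P p) {e} A = (if e \<in> A then 0 else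
     (if e \<in> {i\<in>{1..n}. p \<le> P i} \<and> A \<inter> {i\<in>{1..n}. p \<le> P i} = {} then 1 else 0)
     + (if e \<in> (+) n ` {i\<in>{1..n}. P i = p} then 1 else 0))"
  unfolding trap_fun_def by (rule marg_hit_plus_card) simp

lemma in_F_trap_fun: "in_F S (trap_fun n P p)"
  unfolding trap_fun_def by (rule in_F_hit_plus_card) simp

lemma trap_decision_sets:
  "decision_sets n (\<Union>i\<in>{1..n}. trap_choices n P p i) (trap_choices n P p)"
  unfolding decision_sets_def by (auto simp: trap_choices_def)

lemma trap_decoys_greedy:
  "greedy_outcome (trap_fun n P p) n (trap_choices n P p) P (\<lambda>i\<in>{1..n}. i)"
  unfolding greedy_outcome_def
proof (intro conjI ballI)
  show "(\<lambda>i\<in>{1..n}. i) \<in> profiles n (trap_choices n P p)"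
    unfolding profiles_def trap_choices_def by auto
next
  fix i y
  assume i: "i \<in> {1..n}" and y: "y \<in> trap_choices n P p i"
  define A where "A = pred_agents n P i"
  have A: "(\<lambda>j\<in>{1..n}. j) ` pred_agents n P i = A"
    unfolding A_def pred_agents_def by auto
  have decoy: "marg (trap_fun n P p) {i} A = (if A \<inter> {j\<in>{1..n}. p \<le> P j} = {} then 1 else 0)"
    if "p \<le> P i"
    using i that unfolding marg_trap_fun by (auto simp: A_def pred_agents_def)
  have own: "marg (trap_fun n P p) {n + i} A = (if P i = p then 1 else 0)"
    using i unfolding marg_trap_fun by (auto simp: A_def pred_agents_def)
  have "A \<inter> {j\<in>{1..n}. p \<le> P j} = {}" if "P i = p"
    using that unfolding A_def pred_agents_def by auto
  then show "marg (trap_fun n P p) {y} ((\<lambda>j\<in>{1..n}. j) ` pred_agents n P i)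
      \<le> marg (trap_fun n P p) {(\<lambda>j\<in>{1..n}. j) i} ((\<lambda>j\<in>{1..n}. j) ` pred_agents n P i)"
    unfolding A using y i decoy own by (auto simp: trap_choices_def split: if_splits)
qed

lemma trap_val_decoys: "val (trap_fun n P p) n (\<lambda>i\<in>{1..n}. i) \<le> 1"
proof -
  have "(\<lambda>i\<in>{1..n}. i) ` {1..n} \<inter> (+) n ` {i\<in>{1..n}. P i = p} = {}"
    by auto
  then show ?thesis
    unfolding val_def trap_fun_def hit_plus_card_def by simp
qed

lemma trap_opt_val_ge:
  assumes n: "1 \<le> n" and p: "p \<le> P n"
  shows "real (iteration_load n P p) \<le> opt_val (trap_fun n P p) n (trap_choices n P p)"
proof -
  define G where "G = {i\<in>{1..n}. P i = p}"
  define y where "y = (\<lambda>i\<in>{1..n}. if P i = p then n + i else i)"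
  have y: "y \<in> profiles n (trap_choices n P p)"
    unfolding y_def profiles_def trap_choices_def by auto
  have "(+) n ` G \<subseteq> y ` {1..n}"
    unfolding y_def G_def by force
  then have "card (y ` {1..n} \<inter> (+) n ` G) = card G"
    by (simp add: Int_absorb1 card_image)
  moreover have "y ` {1..n} \<inter> {i\<in>{1..n}. p \<le> P i} \<noteq> {}" if "p < P n"
  proof -
    have "y n = n"
      using n that unfolding y_def by simp
    then show ?thesis
      using n that by force
  qed
  ultimately have "real (iteration_load n P p) \<le> val (trap_fun n P p) n y"
    unfolding val_def trap_fun_def hit_plus_card_def iteration_load_def G_def[symmetric] by auto
  also have "\<dots> \<le> opt_val (trap_fun n P p) n (trap_choices n P p)"
    by (rule val_le_opt_val[OF _ trap_decision_sets y]) (simp add: trap_choices_def)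
  finally show ?thesis .
qed

lemma gamma_le_inverse_load:
  assumes mono: "mono_on {1..n} P"
    and n: "1 \<le> n" and p: "p \<le> P n"
  shows "gamma n P \<le> 1 / real (iteration_load n P p)"
proof -
  let ?f = "trap_fun n P p" and ?X = "trap_choices n P p" and ?x = "\<lambda>i\<in>{1..n}. i"
  have load: "1 \<le> real (iteration_load n P p)"
    using iteration_load_pos[where P = P, OF n p] by simp
  have opt: "real (iteration_load n P p) \<le> opt_val ?f n ?X"
    by (rule trap_opt_val_ge[where P = P, OF n p])
  have "gamma n P \<le> val ?f n ?x / opt_val ?f n ?X"
    using load opt
    by (intro gamma_le_greedy_ratio[OF mono _ in_F_trap_fun trap_decision_sets _ trap_decoys_greedy])
      (auto simp: trap_choices_def)
  also have "\<dots> \<le> 1 / opt_val ?f n ?X"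
    using trap_val_decoys load opt by (intro divide_right_mono) auto
  also have "\<dots> \<le> 1 / real (iteration_load n P p)"
    using load opt by (intro divide_left_mono) auto
  finally show ?thesis .
qed

theorem gamma_eq_inverse_max_load:
  assumes mono: "mono_on {1..n} P"
    and pos: "\<forall>i\<in>{1..n}. 1 \<le> P i" and n: "1 \<le> n"
  shows "gamma n P = 1 / real (max_load n P)"
proof -
  let ?f = "trap_fun n P (P n)" and ?X = "trap_choices n P (P n)"
  have Pn: "1 \<le> P n"
    using pos n by simp
  obtain k where "k \<in> {1..P n}" and "iteration_load n P k = max_load n P"
    using max_load_attained[where P = P, OF Pn] .
  then have "gamma n P \<le> 1 / real (max_load n P)"
    using gamma_le_inverse_load[OF mono n, of k] by simp
  moreover have "1 \<le> max_load n P"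
    using iteration_load_pos[where P = P, OF n order_refl] iteration_load_le_max_load[of "P n" P n] Pn
    by simp
  moreover have "0 < opt_val ?f n ?X"
    using trap_opt_val_ge[where P = P, OF n order_refl] iteration_load_pos[where P = P, OF n order_refl]
    by simp
  moreover have "opt_val f n X \<le> real (max_load n P) * val f n x"
    if "finite S" "in_F S f" "decision_sets n S X" "greedy_outcome f n X P x" for S f X x
    using that iteration_load_le_max_load
    by (intro opt_val_le_times_greedy_val[OF mono pos n]) auto
  ultimately show ?thesis
    by (intro antisym gamma_ge_inverse[OF mono _ in_F_trap_fun trap_decision_sets])
      (auto simp: trap_choices_def)
qed

section \<open>The optimal assignment\<close>

lemma assignments_mono_on:
  assumes "P \<in> assignments n q"
  shows "mono_on {1..n} P"
proof (rule mono_onI)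
  fix i j
  assume "i \<in> {1..n}" and "j \<in> {1..n}" and "i \<le> j"
  then show "P i \<le> P j"
    using assms unfolding assignments_def by (cases "i = j") auto
qed

lemma card_le_max_load:
  assumes P: "P \<in> assignments n q" and n: "1 \<le> n"
  shows "n + q \<le> q * max_load n P + 1"
proof -
  define M where "M = max_load n P"
  have vals: "\<forall>i\<in>{1..n}. P i \<in> {1..q}"
    using P unfolding assignments_def by auto
  have last: "P i \<le> P n" if "i \<in> {1..n}" for i
    using mono_onD[OF assignments_mono_on[OF P]] that n by auto
  have "1 \<le> M"
    using iteration_load_pos[where P = P, OF n order_refl] iteration_load_le_max_load[of "P n" P n] vals n
    unfolding M_def by force
  have group: "card {i\<in>{1..n}. P i = k} + 1 \<le> M + (if k = P n then 1 else 0)"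
    if k: "k \<in> {1..q}" for k
  proof (cases "k \<le> P n")
    case True
    then have "iteration_load n P k \<le> M"
      using k iteration_load_le_max_load unfolding M_def by simp
    then show ?thesis
      unfolding iteration_load_def using True by (cases "k = P n") auto
  next
    case False
    then have "{i\<in>{1..n}. P i = k} = {}"
      using last by force
    then show ?thesis
      using False \<open>1 \<le> M\<close> by (metis card.empty add_0 add_increasing2 zero_le)
  qed
  have "n = (\<Sum>i\<in>{1..n}. 1::nat)"
    by simp
  also have "\<dots> = (\<Sum>k\<in>{1..q}. card {i\<in>{1..n}. P i = k})"
    using vals by (subst sum.group[symmetric, of "{1..n}" "{1..q}" P]) auto
  finally have "n + q = (\<Sum>k\<in>{1..q}. card {i\<in>{1..n}. P i = k} + 1)"
    by (simp add: sum_Suc)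
  also have "\<dots> \<le> (\<Sum>k\<in>{1..q}. M + (if k = P n then 1 else 0))"
    using group by (intro sum_mono) auto
  also have "\<dots> = q * M + 1"
    using vals n by (simp add: sum.distrib)
  finally show ?thesis
    unfolding M_def .
qed

lemma nat_ceiling_divide_le_iff:
  assumes "0 < m"
  shows "nat \<lceil>real i / real m\<rceil> \<le> k \<longleftrightarrow> i \<le> k * m"
proof -
  have "nat \<lceil>real i / real m\<rceil> \<le> k \<longleftrightarrow> real i / real m \<le> real k"
    by (simp add: nat_le_iff ceiling_le_iff)
  also have "\<dots> \<longleftrightarrow> real i \<le> real k * real m"
    using assms by (simp add: divide_le_eq)
  also have "\<dots> \<longleftrightarrow> i \<le> k * m"
    by (simp only: of_nat_mult[symmetric] of_nat_le_iff)
  finally show ?thesis .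
qed

lemma nat_ceiling_divide_mono:
  "i \<le> j \<Longrightarrow> nat \<lceil>real i / real m\<rceil> \<le> nat \<lceil>real j / real m\<rceil>"
  by (intro nat_mono ceiling_mono divide_right_mono) auto

lemma card_nat_ceiling_divide_eq_le:
  assumes "1 \<le> k"
  shows "card {i\<in>A. nat \<lceil>real i / real m\<rceil> = k} \<le> m"
proof (cases "m = 0")
  case True
  then show ?thesis
    using assms by simp
next
  case False
  then have m: "0 < m"
    by simp
  have "{i\<in>A. nat \<lceil>real i / real m\<rceil> = k} \<subseteq> {(k - 1) * m<..k * m}"
  proof
    fix i
    assume "i \<in> {i\<in>A. nat \<lceil>real i / real m\<rceil> = k}"
    then have "nat \<lceil>real i / real m\<rceil> \<le> k" and "\<not> nat \<lceil>real i / real m\<rceil> \<le> k - 1"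
      using assms by auto
    then show "i \<in> {(k - 1) * m<..k * m}"
      unfolding nat_ceiling_divide_le_iff[OF m] by simp
  qed
  then have "card {i\<in>A. nat \<lceil>real i / real m\<rceil> = k} \<le> card {(k - 1) * m<..k * m}"
    by (intro card_mono) auto
  also have "\<dots> = m"
    using assms by (simp add: diff_mult_distrib)
  finally show ?thesis .
qed

lemma nat_ceiling_divide_bounds:
  assumes "0 < q" and "1 \<le> n"
  defines "r \<equiv> nat \<lceil>real n / real q\<rceil>"
  shows "1 \<le> r" and "(r - 1) * q < n" and "n \<le> r * q"
proof -
  show "n \<le> r * q"
    using nat_ceiling_divide_le_iff[OF assms(1), of n r, folded r_def] by simp
  then show "1 \<le> r"
    using assms(2) by (cases r) auto
  then show "(r - 1) * q < n"
    using nat_ceiling_divide_le_iff[OF assms(1), of n "r - 1", folded r_def] by auto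
qed

lemma mod_eq_one_mod_iff:
  fixes a n q :: nat
  assumes "a * q < n" and "n \<le> a * q + q"
  shows "n mod q = 1 mod q \<longleftrightarrow> n = a * q + 1"
proof -
  define d where "d = n - a * q - 1"
  have n: "n - 1 = a * q + d" and "d < q"
    using assms unfolding d_def by auto
  have "n mod q = 1 mod q \<longleftrightarrow> q dvd n - 1"
    using assms(1) by (intro mod_eq_dvd_iff_nat) auto
  also have "\<dots> \<longleftrightarrow> q dvd d"
    unfolding n by (simp add: dvd_add_right_iff)
  also have "\<dots> \<longleftrightarrow> d = 0"
    using \<open>d < q\<close> by (auto dest: dvd_imp_le)
  finally show ?thesis
    using n assms(1) by auto
qed

lemma nat_ceiling_divide_in_range:
  assumes m: "0 < m" and "1 \<le> i" and "i \<le> k * m"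
  shows "nat \<lceil>real i / real m\<rceil> \<in> {1..k}"
proof -
  have "\<not> nat \<lceil>real i / real m\<rceil> \<le> 0"
    unfolding nat_ceiling_divide_le_iff[OF m] using assms(2) by simp
  moreover have "nat \<lceil>real i / real m\<rceil> \<le> k"
    unfolding nat_ceiling_divide_le_iff[OF m] using assms(3) .
  ultimately show ?thesis
    unfolding atLeastAtMost_iff by linarith
qed

lemma least_max_load_le:
  assumes q: "1 \<le> q" and n: "1 \<le> n" and M: "n + q \<le> q * M + 1"
  defines "r \<equiv> nat \<lceil>real n / real q\<rceil>"
  shows "(if n mod q = 1 mod q then r else r + 1) \<le> M"
proof -
  have r: "1 \<le> r" "(r - 1) * q < n" "n \<le> r * q"
    using nat_ceiling_divide_bounds[of q n] q n unfolding r_def by auto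
  have rq: "(r - 1) * q + q = r * q"
    using r(1) by (cases r) auto
  have one_iff: "n mod q = 1 mod q \<longleftrightarrow> n = (r - 1) * q + 1"
    using r rq by (intro mod_eq_one_mod_iff) auto
  show ?thesis
  proof (cases "n mod q = 1 mod q")
    case True
    then have "r * q \<le> q * M"
      using one_iff M rq by linarith
    then show ?thesis
      using True q by (simp add: mult.commute)
  next
    case False
    then have "(r - 1) * q + 1 < n"
      using one_iff r(2) by auto
    then have "r * q < q * M"
      using M rq by linarith
    then show ?thesis
      using False by (simp add: mult.commute)
  qed
qed

lemma Pstar_mod_one_eq:
  assumes q: "1 \<le> q" and n: "1 \<le> n" and mod: "n mod q = 1 mod q"
  defines "r \<equiv> nat \<lceil>real n / real q\<rceil>"
  shows "n = (r - 1) * q + 1"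
    and "Pstar n q i = (if i < n then nat \<lceil>real i / real (r - 1)\<rceil> else q)"
proof -
  have "1 \<le> r" "(r - 1) * q < n" "n \<le> r * q"
    using nat_ceiling_divide_bounds[of q n] q n unfolding r_def by auto
  then show "n = (r - 1) * q + 1"
    using mod by (subst mod_eq_one_mod_iff[symmetric]) (auto simp: diff_mult_distrib)
  show "Pstar n q i = (if i < n then nat \<lceil>real i / real (r - 1)\<rceil> else q)"
    unfolding Pstar_def Let_def r_def[symmetric] using mod by simp
qed

lemma card_Pstar_mod_one_le:
  assumes q: "1 \<le> q" and n: "1 \<le> n" and mod: "n mod q = 1 mod q" and k: "1 \<le> k"
  defines "r \<equiv> nat \<lceil>real n / real q\<rceil>"
  shows "card {i\<in>{1..n}. Pstar n q i = k} \<le> r - 1 + (if k = q then 1 else 0)"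
proof -
  let ?B = "{i\<in>{1..n}. nat \<lceil>real i / real (r - 1)\<rceil> = k}"
  have "{i\<in>{1..n}. Pstar n q i = k} \<subseteq> (if k = q then insert n ?B else ?B)"
    by (auto simp: Pstar_mod_one_eq(2)[OF q n mod, folded r_def])
  then have "card {i\<in>{1..n}. Pstar n q i = k} \<le> card (if k = q then insert n ?B else ?B)"
    by (intro card_mono) auto
  then show ?thesis
    using card_nat_ceiling_divide_eq_le[OF k, of "{1..n}" "r - 1"]
    by (auto simp: card_insert_if split: if_splits)
qed

lemma Pstar_mod_one:
  assumes q: "1 \<le> q" and n: "1 \<le> n" and mod: "n mod q = 1 mod q"
  defines "r \<equiv> nat \<lceil>real n / real q\<rceil>"
  shows "Pstar n q \<in> assignments n q \<and> max_load n (Pstar n q) \<le> r"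
proof -
  note n_eq = Pstar_mod_one_eq(1)[OF q n mod, folded r_def]
  note P = Pstar_mod_one_eq(2)[OF q n mod, folded r_def]
  have vals: "Pstar n q i \<in> {1..q}" if "i \<in> {1..n}" for i
  proof (cases "i < n")
    case True
    then have "0 < r - 1" and "i \<le> q * (r - 1)"
      using that n_eq by (cases "r - 1", auto simp: mult.commute)
    then show ?thesis
      using nat_ceiling_divide_in_range[of "r - 1" i q] that True by (simp add: P)
  qed (use q in \<open>simp add: P\<close>)
  have "\<forall>i\<in>{1..n}. \<forall>j\<in>{1..n}. i < j \<longrightarrow> Pstar n q i \<le> Pstar n q j"
  proof (intro ballI impI)
    fix i j
    assume "i \<in> {1..n}" and "j \<in> {1..n}" and "i < j"
    then show "Pstar n q i \<le> Pstar n q j"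
      using vals[of i] nat_ceiling_divide_mono[of i j "r - 1"] unfolding P by (cases "j < n") auto
  qed
  then have assignment: "Pstar n q \<in> assignments n q"
    unfolding assignments_def using vals by blast
  have "\<forall>k\<in>{1..Pstar n q n}. iteration_load n (Pstar n q) k \<le> r"
  proof
    fix k
    assume "k \<in> {1..Pstar n q n}"
    moreover have "Pstar n q n = q"
      by (simp add: P)
    moreover have "1 \<le> r"
      using nat_ceiling_divide_bounds(1)[of q n] q n unfolding r_def by simp
    ultimately show "iteration_load n (Pstar n q) k \<le> r"
      using card_Pstar_mod_one_le[OF q n mod, of k, folded r_def] unfolding iteration_load_def
      by (cases "k = q") auto
  qed
  then show ?thesis
    using assignment q by (auto simp: P intro: max_load_le)
qed

lemma Pstar_not_mod_one:
  assumes q: "1 \<le> q" and n: "1 \<le> n" and mod: "n mod q \<noteq> 1 mod q"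
  defines "r \<equiv> nat \<lceil>real n / real q\<rceil>"
  shows "Pstar n q \<in> assignments n q \<and> max_load n (Pstar n q) \<le> r + 1"
proof -
  have r: "1 \<le> r" "n \<le> r * q"
    using nat_ceiling_divide_bounds[of q n] q n unfolding r_def by auto
  have P: "Pstar n q i = nat \<lceil>real i / real r\<rceil>" for i
    unfolding Pstar_def Let_def r_def[symmetric] using mod by simp
  have vals: "Pstar n q i \<in> {1..q}" if "i \<in> {1..n}" for i
    using that r nat_ceiling_divide_in_range[of r i q] by (simp add: P mult.commute)
  have "\<forall>i\<in>{1..n}. \<forall>j\<in>{1..n}. i < j \<longrightarrow> Pstar n q i \<le> Pstar n q j"
    unfolding P by (meson less_imp_le nat_ceiling_divide_mono)
  then have assignment: "Pstar n q \<in> assignments n q"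
    unfolding assignments_def using vals by blast
  have "\<forall>k\<in>{1..Pstar n q n}. iteration_load n (Pstar n q) k \<le> r + 1"
  proof
    fix k
    assume "k \<in> {1..Pstar n q n}"
    then have "card {i\<in>{1..n}. Pstar n q i = k} \<le> r"
      unfolding P by (intro card_nat_ceiling_divide_eq_le) simp
    then show "iteration_load n (Pstar n q) k \<le> r + 1"
      unfolding iteration_load_def by simp
  qed
  then show ?thesis
    using assignment vals[of n] n by (auto intro: max_load_le)
qed

theorem theorem1:
  fixes n q :: nat
  assumes "1 \<le> q" and "q \<le> n"
  defines "r \<equiv> nat \<lceil>real n / real q\<rceil>"
  shows "rho n q = (if n mod q = 1 mod q then 1 / real r else 1 / real (r + 1))
         \<and> Pstar n q \<in> assignments n q
         \<and> gamma n (Pstar n q) = rho n q"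
proof -
  define D where "D = (if n mod q = 1 mod q then r else r + 1)"
  have q: "1 \<le> q" and n: "1 \<le> n"
    using assms by auto
  have gamma_eq: "gamma n P = 1 / real (max_load n P)" if "P \<in> assignments n q" for P
    using that n by (intro gamma_eq_inverse_max_load assignments_mono_on) (auto simp: assignments_def)
  have load_ge: "D \<le> max_load n P" if "P \<in> assignments n q" for P
    using least_max_load_le[OF q n card_le_max_load[OF that n]] unfolding D_def r_def .
  have Pstar: "Pstar n q \<in> assignments n q" and "max_load n (Pstar n q) \<le> D"
    using Pstar_mod_one[OF q n] Pstar_not_mod_one[OF q n] unfolding D_def r_def
    by (cases "n mod q = 1 mod q"; simp)+
  then have gamma_Pstar: "gamma n (Pstar n q) = 1 / real D"
    using gamma_eq load_ge by (simp add: le_antisym)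
  have "1 \<le> D"
    using nat_ceiling_divide_bounds(1)[of q n] q n unfolding D_def r_def by simp
  then have "gamma n P \<le> 1 / real D" if "P \<in> assignments n q" for P
    using gamma_eq[OF that] load_ge[OF that] by (simp add: frac_le)
  moreover have "1 / real D \<in> gamma n ` assignments n q"
    using Pstar gamma_Pstar by (metis image_eqI)
  ultimately have "rho n q = 1 / real D"
    unfolding rho_def by (intro cSup_eq_maximum) auto
  then show ?thesis
    using Pstar gamma_Pstar unfolding D_def by simp
qed

end
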